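(* Let $g,h\in\mathbb{R}[x]$ be polynomials of degree at least one and let $f=gh$, $n=\deg f$. Then the number of real numbers $x$ satisfying both (a) $g(x)=\pm1$ or $h(x)=\pm1$, and (b) $f(x)>1$, is at most $n$. *)

theory Defs
  imports "HOL-Computational_Algebra.Polynomial"
begin

end

theory Submission
  imports Defs
begin

text \<open>
  Cut the real line at the critical points of \<open>g\<close> into at most \<open>deg g\<close> pieces on which \<open>g\<close> is
  strictly monotone, and likewise for \<open>h\<close>. A piece of \<open>g\<close> contains at most two points with
  \<open>g = \<plusminus>1\<close>; call it crowded if it contains two such points \<open>p < q\<close> with \<open>gh > 1\<close>.
  Then \<open>g(p) = -g(q)\<close>, so \<open>h\<close> changes sign with \<open>|h| > 1\<close> at \<open>p\<close> and \<open>q\<close> and takes the value 1 at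
  some \<open>\<tau> \<in> (p, q)\<close>. By monotonicity every point of the piece of \<open>h\<close> containing \<open>\<tau>\<close> where
  \<open>h = \<plusminus>1\<close> lies in \<open>(p, q)\<close>, where \<open>|g| < 1\<close>; so this piece of \<open>h\<close> is barren (it contains
  no point with \<open>h = \<plusminus>1\<close> and \<open>gh > 1\<close>), and it determines the crowded piece of \<open>g\<close>.
  Thus crowded pieces of \<open>g\<close> inject into barren pieces of \<open>h\<close> and vice versa; as every piece
  holds at most two points, each crowded piece is paid for by a barren one, and the total is at
  most the number of pieces, \<open>deg g + deg h\<close>.
\<close>

text \<open>\<open>R x\<close> is the index of the piece containing \<open>x\<close>; as \<open>R\<close> is monotone, the pieces are
  intervals.\<close>

definition piecewise_monotone :: "(real \<Rightarrow> real) \<Rightarrow> (real \<Rightarrow> nat) \<Rightarrow> nat \<Rightarrow> bool" where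
  "piecewise_monotone H R m \<longleftrightarrow> mono R \<and> (\<forall>x. R x < m) \<and>
     (\<forall>x y. x < y \<longrightarrow> R x = R y \<longrightarrow> strict_mono_on {x..y} H \<or> strict_antimono_on {x..y} H)"

lemma piecewise_monotone_pieceE:
  assumes "piecewise_monotone H R m" "R s = R t" "s < t"
  obtains "\<And>a b. s \<le> a \<Longrightarrow> a < b \<Longrightarrow> b \<le> t \<Longrightarrow> H a < H b"
    | "\<And>a b. s \<le> a \<Longrightarrow> a < b \<Longrightarrow> b \<le> t \<Longrightarrow> H b < H a"
proof -
  have "strict_mono_on {s..t} H \<or> strict_antimono_on {s..t} H"
    using assms unfolding piecewise_monotone_def by blast
  then show thesis
  proof
    assume "strict_mono_on {s..t} H"
    then show thesis
      by (intro that(1)) (auto intro: monotone_onD)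
  next
    assume "strict_antimono_on {s..t} H"
    then show thesis
      by (intro that(2)) (auto intro: monotone_onD)
  qed
qed

lemma piecewise_monotone_inj_on_piece:
  assumes "piecewise_monotone H R m"
  shows "inj_on H {x. R x = k}"
proof (rule linorder_inj_onI')
  fix x y assume "x \<in> {x. R x = k}" "y \<in> {x. R x = k}" "x < y"
  then show "H x \<noteq> H y"
    by (cases rule: piecewise_monotone_pieceE[OF assms, of x y]) fastforce+
qed

lemma piecewise_monotone_abs_between:
  assumes "piecewise_monotone H R m" "R s = R t" "s < x" "x < t"
  shows "\<bar>H x\<bar> < max \<bar>H s\<bar> \<bar>H t\<bar>"
proof -
  have "H s < H x \<and> H x < H t \<or> H t < H x \<and> H x < H s"
    using assms(3,4)
    by (cases rule: piecewise_monotone_pieceE[OF assms(1,2) order.strict_trans[OF assms(3,4)]]) auto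
  then show ?thesis by linarith
qed

lemma piecewise_monotone_piece_preimage:
  assumes "piecewise_monotone H R m" "finite V"
  shows "finite {x. R x = k \<and> H x \<in> V}" and "card {x. R x = k \<and> H x \<in> V} \<le> card V"
proof -
  have inj: "inj_on H {x. R x = k \<and> H x \<in> V}"
    using piecewise_monotone_inj_on_piece[OF assms(1), of k] by (rule inj_on_subset) auto
  show "finite {x. R x = k \<and> H x \<in> V}"
    using inj_on_finite[OF inj _ assms(2)] by auto
  show "card {x. R x = k \<and> H x \<in> V} \<le> card V"
    using card_inj_on_le[OF inj _ assms(2)] by auto
qed

lemma piecewise_monotone_finite_preimage:
  assumes "piecewise_monotone H R m" "finite V"
  shows "finite {x. H x \<in> V}"
proof -
  have "{x. H x \<in> V} = (\<Union>k<m. {x. R x = k \<and> H x \<in> V})"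
    using assms(1) unfolding piecewise_monotone_def by auto
  then show ?thesis
    using piecewise_monotone_piece_preimage(1)[OF assms] by simp
qed

lemma card_eq_sum_card_fibers:
  assumes "finite A" "finite K" "R ` A \<subseteq> K"
  shows "card A = (\<Sum>k\<in>K. card {x\<in>A. R x = k})"
  unfolding card_eq_sum using sum.group[OF assms, of "\<lambda>_. 1"] by (rule sym)

lemma sum_add_card_zeros_le:
  fixes c :: "'a \<Rightarrow> nat"
  assumes "finite I" "\<And>k. k \<in> I \<Longrightarrow> c k \<le> 2"
  shows "sum c I + card {k\<in>I. c k = 0} \<le> card I + card {k\<in>I. 2 \<le> c k}"
proof -
  have "sum c I + card {k\<in>I. c k = 0} = (\<Sum>k\<in>I. c k + of_bool (c k = 0))"
    using assms(1) by (simp add: sum.distrib Collect_conj_eq Int_commute)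
  also have "\<dots> \<le> (\<Sum>k\<in>I. 1 + of_bool (2 \<le> c k))"
    using assms(2) by (intro sum_mono) fastforce
  also have "\<dots> = card I + card {k\<in>I. 2 \<le> c k}"
    using assms(1)
    by (simp only: sum.distrib sum_of_bool_eq card_eq_sum[symmetric]) (simp add: Collect_conj_eq Int_commute)
  finally show ?thesis .
qed

lemma barren_piece_between_crowded_pair:
  fixes G H :: "real \<Rightarrow> real"
  assumes cH: "continuous_on UNIV H"
    and pG: "piecewise_monotone G Rg m" and pH: "piecewise_monotone H Rh n"
    and "p < q" "Rg p = Rg q" "\<bar>G p\<bar> = 1" "\<bar>G q\<bar> = 1"
    and "G p * H p > 1" "G q * H q > 1"
  obtains \<tau> where "\<bar>H \<tau>\<bar> = 1"
    and "\<And>\<sigma>. Rh \<sigma> = Rh \<tau> \<Longrightarrow> \<bar>H \<sigma>\<bar> = 1 \<Longrightarrow> Rg \<sigma> = Rg p \<and> G \<sigma> * H \<sigma> < 1"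
proof -
  have prod_le_abs: "G x * H x \<le> \<bar>G x\<bar> * \<bar>H x\<bar>" for x
    by (metis abs_ge_self abs_mult)
  have Hp: "\<bar>H p\<bar> > 1" and Hq: "\<bar>H q\<bar> > 1"
    using prod_le_abs[of p] prod_le_abs[of q] assms(6-9) by simp_all
  have "G p \<noteq> G q"
    using inj_onD[OF piecewise_monotone_inj_on_piece[OF pG, of "Rg q"]] assms(4,5) by force
  then have "G q = - G p" and "G p * G p = 1"
    using assms(6,7) by (auto simp: abs_if split: if_splits)
  have "1 < (G p * H p) * (G q * H q)"
    using assms(8,9) by (rule less_1_mult)
  also have "\<dots> = - (G p * G p) * (H p * H q)"
    using \<open>G q = - G p\<close> by (simp add: algebra_simps)
  finally have "H p * H q < 0"
    using \<open>G p * G p = 1\<close> by simp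
  then have "H p < 1 \<and> 1 < H q \<or> H q < 1 \<and> 1 < H p"
    using Hp Hq by (auto simp: mult_less_0_iff)
  moreover have "continuous_on {p..q} H"
    using cH by (rule continuous_on_subset) simp
  ultimately obtain \<tau> where "p \<le> \<tau>" "\<tau> \<le> q" "H \<tau> = 1"
    using IVT'[of H p 1 q] IVT2'[of H q 1 p] \<open>p < q\<close> by force
  with Hp Hq have "p < \<tau>" "\<tau> < q"
    by (auto simp: order.order_iff_strict)
  show thesis
  proof (rule that)
    show "\<bar>H \<tau>\<bar> = 1" using \<open>H \<tau> = 1\<close> by simp
  next
    fix \<sigma> assume \<sigma>: "Rh \<sigma> = Rh \<tau>" "\<bar>H \<sigma>\<bar> = 1"
    have "\<not> \<sigma> < p"
      using piecewise_monotone_abs_between[OF pH \<sigma>(1) _ \<open>p < \<tau>\<close>] \<sigma>(2) \<open>H \<tau> = 1\<close> Hp by auto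
    moreover have "\<not> q < \<sigma>"
      using piecewise_monotone_abs_between[OF pH \<sigma>(1)[symmetric] \<open>\<tau> < q\<close>] \<sigma>(2) \<open>H \<tau> = 1\<close> Hq
      by auto
    ultimately have "p < \<sigma>" "\<sigma> < q"
      using \<sigma>(2) Hp Hq by (auto simp: not_less order.order_iff_strict)
    then have "Rg \<sigma> = Rg p"
      using pG \<open>Rg p = Rg q\<close> unfolding piecewise_monotone_def mono_def
      by (metis order.antisym order.strict_implies_order)
    moreover have "\<bar>G \<sigma>\<bar> < 1"
      using piecewise_monotone_abs_between[OF pG \<open>Rg p = Rg q\<close> \<open>p < \<sigma>\<close> \<open>\<sigma> < q\<close>] assms(6,7)
      by simp
    ultimately show "Rg \<sigma> = Rg p \<and> G \<sigma> * H \<sigma> < 1"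
      using prod_le_abs[of \<sigma>] \<sigma>(2) by simp
  qed
qed

lemma barren_piece_of_crowded_piece:
  fixes G H :: "real \<Rightarrow> real"
  assumes cH: "continuous_on UNIV H"
    and pG: "piecewise_monotone G Rg m" and pH: "piecewise_monotone H Rh n"
    and crowded: "2 \<le> card {x. \<bar>G x\<bar> = 1 \<and> G x * H x > 1 \<and> Rg x = k}"
  shows "\<exists>\<tau>. \<bar>H \<tau>\<bar> = 1 \<and>
           (\<forall>\<sigma>. Rh \<sigma> = Rh \<tau> \<and> \<bar>H \<sigma>\<bar> = 1 \<longrightarrow> Rg \<sigma> = k \<and> G \<sigma> * H \<sigma> < 1)"
proof -
  let ?A = "{x. \<bar>G x\<bar> = 1 \<and> G x * H x > 1 \<and> Rg x = k}"
  have "\<not> card ?A \<le> Suc 0" and "finite ?A"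
    using crowded by (simp_all add: card_ge_0_finite)
  then obtain x y where "x \<in> ?A" "y \<in> ?A" "x \<noteq> y"
    using card_le_Suc0_iff_eq by blast
  then obtain p q where "p < q" "p \<in> ?A" "q \<in> ?A"
    by (cases x y rule: linorder_cases) blast+
  then have "Rg p = k" "Rg p = Rg q" "\<bar>G p\<bar> = 1" "\<bar>G q\<bar> = 1" "G p * H p > 1" "G q * H q > 1"
    by simp_all
  with barren_piece_between_crowded_pair[OF cH pG pH \<open>p < q\<close>] show ?thesis
    by metis
qed

lemma card_crowded_pieces_le_card_barren_pieces:
  fixes G H :: "real \<Rightarrow> real"
  assumes cH: "continuous_on UNIV H"
    and pG: "piecewise_monotone G Rg m" and pH: "piecewise_monotone H Rh n"
  shows "card {k\<in>{..<m}. 2 \<le> card {x. \<bar>G x\<bar> = 1 \<and> G x * H x > 1 \<and> Rg x = k}}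
       \<le> card {l\<in>{..<n}. card {x. \<bar>H x\<bar> = 1 \<and> G x * H x > 1 \<and> Rh x = l} = 0}"
    (is "card ?crowded \<le> card ?barren")
proof -
  have "\<forall>k\<in>?crowded. \<exists>\<tau>. \<bar>H \<tau>\<bar> = 1 \<and>
          (\<forall>\<sigma>. Rh \<sigma> = Rh \<tau> \<and> \<bar>H \<sigma>\<bar> = 1 \<longrightarrow> Rg \<sigma> = k \<and> G \<sigma> * H \<sigma> < 1)"
    using barren_piece_of_crowded_piece[OF cH pG pH] by blast
  from bchoice[OF this] obtain \<tau> where \<tau>: "\<forall>k\<in>?crowded. \<bar>H (\<tau> k)\<bar> = 1 \<and>
          (\<forall>\<sigma>. Rh \<sigma> = Rh (\<tau> k) \<and> \<bar>H \<sigma>\<bar> = 1 \<longrightarrow> Rg \<sigma> = k \<and> G \<sigma> * H \<sigma> < 1)"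
    ..
  have \<tau>_unit: "\<bar>H (\<tau> k)\<bar> = 1" if "k \<in> ?crowded" for k
    using bspec[OF \<tau> that] by (rule conjunct1)
  have \<tau>_piece: "Rg \<sigma> = k \<and> G \<sigma> * H \<sigma> < 1"
    if "k \<in> ?crowded" "Rh \<sigma> = Rh (\<tau> k)" "\<bar>H \<sigma>\<bar> = 1" for k \<sigma>
    using bspec[OF \<tau> that(1), THEN conjunct2, rule_format, OF conjI[OF that(2,3)]] .
  have "inj_on (\<lambda>k. Rh (\<tau> k)) ?crowded"
  proof (rule inj_onI)
    fix k k' assume k: "k \<in> ?crowded" and k': "k' \<in> ?crowded" and "Rh (\<tau> k) = Rh (\<tau> k')"
    then have "Rg (\<tau> k') = k" and "Rg (\<tau> k') = k'"
      using \<tau>_piece[OF k _ \<tau>_unit[OF k']] \<tau>_piece[OF k' refl \<tau>_unit[OF k']] by simp_all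
    then show "k = k'" by simp
  qed
  moreover have "(\<lambda>k. Rh (\<tau> k)) ` ?crowded \<subseteq> ?barren"
  proof (rule image_subsetI)
    fix k assume k: "k \<in> ?crowded"
    have "Rh (\<tau> k) < n"
      using pH unfolding piecewise_monotone_def by blast
    moreover have "{x. \<bar>H x\<bar> = 1 \<and> G x * H x > 1 \<and> Rh x = Rh (\<tau> k)} = {}"
      using \<tau>_piece[OF k] by force
    ultimately show "Rh (\<tau> k) \<in> ?barren"
      by (simp only: mem_Collect_eq lessThan_iff card.empty simp_thms)
  qed
  moreover have "finite ?barren"
    by simp
  ultimately show ?thesis
    by (rule card_inj_on_le)
qed

lemma piecewise_monotone_count_unit_points:
  assumes pG: "piecewise_monotone G R m" and A: "A \<subseteq> {x. \<bar>G x\<bar> = 1}"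
  shows "finite A"
    and "card A + card {k\<in>{..<m}. card {x\<in>A. R x = k} = 0}
           \<le> m + card {k\<in>{..<m}. 2 \<le> card {x\<in>A. R x = k}}"
proof -
  have A': "A \<subseteq> {x. G x \<in> {-1, 1}}"
    using A by auto
  show "finite A"
    using piecewise_monotone_finite_preimage[OF pG] A' by (rule finite_subset[rotated]) simp
  have "card {x\<in>A. R x = k} \<le> 2" for k
  proof -
    have "card {x\<in>A. R x = k} \<le> card {x. R x = k \<and> G x \<in> {-1, 1}}"
      using piecewise_monotone_piece_preimage(1)[OF pG, of "{-1, 1}" k] A' by (intro card_mono) auto
    also have "\<dots> \<le> 2"
      using piecewise_monotone_piece_preimage(2)[OF pG, of "{-1, 1}" k] by simp
    finally show ?thesis .
  qed
  moreover have "card A = (\<Sum>k<m. card {x\<in>A. R x = k})"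
    using pG \<open>finite A\<close> unfolding piecewise_monotone_def
    by (intro card_eq_sum_card_fibers) auto
  ultimately show "card A + card {k\<in>{..<m}. card {x\<in>A. R x = k} = 0}
           \<le> m + card {k\<in>{..<m}. 2 \<le> card {x\<in>A. R x = k}}"
    using sum_add_card_zeros_le[of "{..<m}" "\<lambda>k. card {x\<in>A. R x = k}"] by simp
qed

lemma card_unit_points_product_gt_one:
  fixes G H :: "real \<Rightarrow> real"
  assumes cG: "continuous_on UNIV G" and cH: "continuous_on UNIV H"
    and pG: "piecewise_monotone G Rg m" and pH: "piecewise_monotone H Rh n"
  defines "S \<equiv> {x. (\<bar>G x\<bar> = 1 \<or> \<bar>H x\<bar> = 1) \<and> G x * H x > 1}"
  shows "finite S \<and> card S \<le> m + n"
proof -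
  define A where "A = {x. \<bar>G x\<bar> = 1 \<and> G x * H x > 1}"
  define B where "B = {x. \<bar>H x\<bar> = 1 \<and> G x * H x > 1}"
  have "S = A \<union> B"
    unfolding S_def A_def B_def by auto
  have "G x * H x \<le> 1" if "\<bar>G x\<bar> = 1" "\<bar>H x\<bar> = 1" for x
    using abs_ge_self[of "G x * H x"] that by (simp add: abs_mult)
  then have "A \<inter> B = {}"
    unfolding A_def B_def by force
  have "A \<subseteq> {x. \<bar>G x\<bar> = 1}" "B \<subseteq> {x. \<bar>H x\<bar> = 1}"
    unfolding A_def B_def by auto
  note countA = piecewise_monotone_count_unit_points[OF pG this(1)]
    and countB = piecewise_monotone_count_unit_points[OF pH this(2)]
  have "card {k\<in>{..<m}. 2 \<le> card {x\<in>A. Rg x = k}} \<le> card {l\<in>{..<n}. card {x\<in>B. Rh x = l} = 0}"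
    using card_crowded_pieces_le_card_barren_pieces[OF cH pG pH] by (simp add: A_def B_def)
  moreover have "card {l\<in>{..<n}. 2 \<le> card {x\<in>B. Rh x = l}} \<le> card {k\<in>{..<m}. card {x\<in>A. Rg x = k} = 0}"
    using card_crowded_pieces_le_card_barren_pieces[OF cG pH pG] by (simp add: A_def B_def mult.commute)
  ultimately show ?thesis
    using countA countB card_Un_disjoint[OF countA(1) countB(1) \<open>A \<inter> B = {}\<close>] \<open>S = A \<union> B\<close>
    by simp
qed

lemma poly_sign_constant_between_roots:
  fixes p :: "real poly"
  assumes no_root: "\<And>z. a < z \<Longrightarrow> z < b \<Longrightarrow> poly p z \<noteq> 0"
    and "a < u" "u < b" "a < v" "v < b"
  shows "0 < poly p u * poly p v"
  using assms(2-)
proof (induction u v rule: linorder_wlog)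
  case (le u v)
  show ?case
  proof (cases "u = v")
    case True
    then show ?thesis using no_root[OF le(2,3)] by (auto simp: zero_less_mult_iff linorder_neq_iff)
  next
    case False
    with le have "u < v" by simp
    have "\<not> poly p u * poly p v < 0"
      using poly_IVT[OF \<open>u < v\<close>] no_root le(2-5) by force
    then show ?thesis
      using no_root[OF le(2,3)] no_root[OF le(4,5)] by (simp add: not_less order_le_less)
  qed
next
  case (sym u v)
  then show ?case by (simp add: mult.commute)
qed

lemma poly_strict_mono_or_antimono_on:
  fixes p :: "real poly"
  assumes "x < y" and no_crit: "\<And>z. x < z \<Longrightarrow> z < y \<Longrightarrow> poly (pderiv p) z \<noteq> 0"
  shows "strict_mono_on {x..y} (poly p) \<or> strict_antimono_on {x..y} (poly p)"
proof -
  define c where "c = (x + y) / 2"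
  have "x < c" "c < y"
    using \<open>x < y\<close> by (simp_all add: c_def)
  have "0 < (poly p t - poly p s) * poly (pderiv p) c" if "x \<le> s" "s < t" "t \<le> y" for s t
  proof -
    obtain z where "s < z" "z < t" "poly p t - poly p s = (t - s) * poly (pderiv p) z"
      using poly_MVT[OF \<open>s < t\<close>] by blast
    moreover have "0 < poly (pderiv p) z * poly (pderiv p) c"
      using poly_sign_constant_between_roots[OF no_crit] \<open>x < c\<close> \<open>c < y\<close> \<open>s < z\<close> \<open>z < t\<close> that
      by simp
    ultimately show ?thesis
      using \<open>s < t\<close> by (simp add: mult.assoc)
  qed
  then show ?thesis
    by (cases "0 < poly (pderiv p) c") (auto simp: monotone_on_def zero_less_mult_iff)
qed

text \<open>The pieces of \<open>poly p\<close> are the intervals between consecutive critical points, each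
  critical point belonging to the piece on its left.\<close>

definition critical_count :: "real poly \<Rightarrow> real \<Rightarrow> nat" where
  "critical_count p x = card {c. poly (pderiv p) c = 0 \<and> c < x}"

lemma finite_critical_points_below:
  fixes p :: "real poly"
  assumes "pderiv p \<noteq> 0"
  shows "finite {c. poly (pderiv p) c = 0 \<and> c < x}"
  using poly_roots_finite[OF assms] by (rule finite_subset[rotated]) auto

lemma critical_count_eq_imp_no_critical_point:
  fixes p :: "real poly"
  assumes "pderiv p \<noteq> 0" "critical_count p x = critical_count p y" "x < z" "z < y"
  shows "poly (pderiv p) z \<noteq> 0"
proof
  assume "poly (pderiv p) z = 0"
  then have "z \<in> {c. poly (pderiv p) c = 0 \<and> c < y} - {c. poly (pderiv p) c = 0 \<and> c < x}"
    using assms(3,4) by simp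
  moreover have "{c. poly (pderiv p) c = 0 \<and> c < x} \<subseteq> {c. poly (pderiv p) c = 0 \<and> c < y}"
    using assms(3,4) by auto
  ultimately have "{c. poly (pderiv p) c = 0 \<and> c < x} \<subset> {c. poly (pderiv p) c = 0 \<and> c < y}"
    by blast
  then have "critical_count p x < critical_count p y"
    unfolding critical_count_def by (rule psubset_card_mono[OF finite_critical_points_below[OF assms(1)]])
  with assms(2) show False
    by simp
qed

lemma poly_piecewise_monotone:
  fixes p :: "real poly"
  assumes "degree p \<ge> 1"
  shows "piecewise_monotone (poly p) (critical_count p) (degree p)"
proof -
  have "pderiv p \<noteq> 0"
    using assms by (simp add: pderiv_eq_0_iff)
  note fin = finite_critical_points_below[OF this]
  have "mono (critical_count p)"
    unfolding critical_count_def by (rule monoI, rule card_mono[OF fin]) auto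
  moreover have "critical_count p x < degree p" for x
  proof -
    have "critical_count p x \<le> card {c. poly (pderiv p) c = 0}"
      unfolding critical_count_def
      by (rule card_mono[OF poly_roots_finite[OF \<open>pderiv p \<noteq> 0\<close>]]) auto
    also have "\<dots> \<le> degree (pderiv p)"
      using \<open>pderiv p \<noteq> 0\<close> by (rule card_poly_roots_bound)
    finally show ?thesis
      using assms by (simp add: degree_pderiv)
  qed
  moreover have "strict_mono_on {x..y} (poly p) \<or> strict_antimono_on {x..y} (poly p)"
    if "x < y" "critical_count p x = critical_count p y" for x y
    using poly_strict_mono_or_antimono_on[OF \<open>x < y\<close>]
      critical_count_eq_imp_no_critical_point[OF \<open>pderiv p \<noteq> 0\<close> that(2)] by blast
  ultimately show ?thesis
    unfolding piecewise_monotone_def by blast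
qed

theorem mainTheorem7:
  fixes g h :: "real poly"
  assumes "degree g \<ge> 1" and "degree h \<ge> 1"
  shows "finite {x::real. (poly g x = 1 \<or> poly g x = -1 \<or> poly h x = 1 \<or> poly h x = -1)
                         \<and> poly (g * h) x > 1}
     \<and> card {x::real. (poly g x = 1 \<or> poly g x = -1 \<or> poly h x = 1 \<or> poly h x = -1)
                         \<and> poly (g * h) x > 1} \<le> degree (g * h)"
proof -
  have "{x. (poly g x = 1 \<or> poly g x = -1 \<or> poly h x = 1 \<or> poly h x = -1) \<and> poly (g * h) x > 1}
      = {x. (\<bar>poly g x\<bar> = 1 \<or> \<bar>poly h x\<bar> = 1) \<and> poly g x * poly h x > 1}"
    by auto
  moreover have "degree (g * h) = degree g + degree h"
    using assms by (intro degree_mult_eq) auto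
  ultimately show ?thesis
    using card_unit_points_product_gt_one[OF _ _ poly_piecewise_monotone[OF assms(1)]
        poly_piecewise_monotone[OF assms(2)]] by (simp add: continuous_on_poly)
qed

end
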